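(* Let $G$ be an $(N,k)$ Adinkra with vertex set $V$, with the matrices $\gamma_1,\dots,\gamma_N$ defined as in the context, and let $M=\gamma_{i_1}\gamma_{i_2}\cdots\gamma_{i_t}$ for some $i_1,\dots,i_t\in\{1,\dots,N\}$. Then $M_{x,x}\neq0$ for some $x\in V$ if and only if $M_{x,x}\neq 0$ for all $x\in V$.
   Context: An Adinkra of dimension $N$ is a finite connected simple graph $G=(V,E)$ with: a bipartition of $V$ into bosons and fermions (every edge joins a boson and a fermion); a height function (irrelevant here); a coloring of $E$ by colors $\{1,\dots,N\}$ such that each vertex is incident to exactly one edge of each color; an edge parity $\pi:E\to\mathbb{Z}_2$ (parity $1$ = dashed); such that every path with edge colors $(i,j)$, $i\ne j$, lies in a unique 4-cycle with colors $(i,j,i,j)$, each having an odd number of dashed edges. If $|V|=2^{N-k}$, $G$ is an $(N,k)$ Adinkra; it has $n=2^{N-k-1}$ bosons $b_1,\dots,b_n$ and $n$ fermions $f_1,\dots,f_n$. For each color $i$, $L_i$ is the $n\times n$ matrix with $(L_i)_{r,s}=+1$ if $b_r,f_s$ are joined by a solid edge of color $i$, $-1$ if joined by a dashed edge of color $i$, and $0$ otherwise. $\gamma_i$ is the $2n\times 2n$ matrix $\begin{pmatrix}0&L_i\\ L_i^{T}&0\end{pmatrix}$ with rows and columns indexed by $V$ (bosons first, then fermions). *)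

theory Defs
  imports Main
begin

text \<open>A graph with vertex set V (of type 'v) and edge set E, edges being
  two-element subsets of V. bos is the set of bosons (fermions are V - bos),
  col is the edge colouring, par the edge parity (True = dashed, i.e. parity 1).
  The height function is irrelevant for the statement and omitted.\<close>

definition four_cycle_ok ::
  "'v set set \<Rightarrow> ('v set \<Rightarrow> nat) \<Rightarrow> ('v set \<Rightarrow> bool) \<Rightarrow> 'v \<Rightarrow> 'v \<Rightarrow> 'v \<Rightarrow> nat \<Rightarrow> nat \<Rightarrow> bool" where
  "four_cycle_ok E col par v0 v1 v2 i j \<longleftrightarrow>
     (\<exists>!v3. {v2, v3} \<in> E \<and> col {v2, v3} = i \<and> {v3, v0} \<in> E \<and> col {v3, v0} = j) \<and>
     (\<forall>v3. {v2, v3} \<in> E \<and> col {v2, v3} = i \<and> {v3, v0} \<in> E \<and> col {v3, v0} = j \<longrightarrow>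
        odd (length (filter par [{v0, v1}, {v1, v2}, {v2, v3}, {v3, v0}])))"

definition adinkra ::
  "'v set \<Rightarrow> 'v set set \<Rightarrow> 'v set \<Rightarrow> ('v set \<Rightarrow> nat) \<Rightarrow> ('v set \<Rightarrow> bool) \<Rightarrow> nat \<Rightarrow> bool" where
  "adinkra V E bos col par N \<longleftrightarrow>
     finite V \<and>
     \<comment> \<open>simple graph: every edge is a 2-element subset of V\<close>
     (\<forall>e\<in>E. \<exists>u w. u \<in> V \<and> w \<in> V \<and> u \<noteq> w \<and> e = {u, w}) \<and>
     \<comment> \<open>connected\<close>
     (\<forall>u\<in>V. \<forall>w\<in>V. (u, w) \<in> {(a, b). {a, b} \<in> E}\<^sup>*) \<and>
     \<comment> \<open>bipartition into bosons and fermions; every edge joins a boson and a fermion\<close>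
     bos \<subseteq> V \<and>
     (\<forall>u w. {u, w} \<in> E \<longrightarrow> (u \<in> bos \<longleftrightarrow> w \<notin> bos)) \<and>
     \<comment> \<open>colouring by colours 1..N, one edge of each colour at every vertex\<close>
     (\<forall>e\<in>E. col e \<in> {1..N}) \<and>
     (\<forall>v\<in>V. \<forall>i\<in>{1..N}. \<exists>!e. e \<in> E \<and> v \<in> e \<and> col e = i) \<and>
     \<comment> \<open>every (i,j)-path lies in a unique (i,j,i,j) 4-cycle, with an odd number of dashed edges\<close>
     (\<forall>v0 v1 v2 i j. i \<noteq> j \<and> {v0, v1} \<in> E \<and> col {v0, v1} = i \<and>
         {v1, v2} \<in> E \<and> col {v1, v2} = j \<longrightarrow> four_cycle_ok E col par v0 v1 v2 i j)"

definition NK_adinkra ::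
  "'v set \<Rightarrow> 'v set set \<Rightarrow> 'v set \<Rightarrow> ('v set \<Rightarrow> nat) \<Rightarrow> ('v set \<Rightarrow> bool) \<Rightarrow> nat \<Rightarrow> nat \<Rightarrow> bool" where
  "NK_adinkra V E bos col par N k \<longleftrightarrow> adinkra V E bos col par N \<and> card V = 2 ^ (N - k)"

definition Lmat :: "'v set set \<Rightarrow> ('v set \<Rightarrow> nat) \<Rightarrow> ('v set \<Rightarrow> bool) \<Rightarrow> nat \<Rightarrow> 'v \<Rightarrow> 'v \<Rightarrow> int" where
  "Lmat E col par i b f =
     (if {b, f} \<in> E \<and> col {b, f} = i then (if par {b, f} then -1 else 1) else 0)"

text \<open>gamma_i = [[0, L_i],[L_i^T, 0]], rows/columns indexed by V.\<close>
definition gamma :: "'v set \<Rightarrow> 'v set set \<Rightarrow> ('v set \<Rightarrow> nat) \<Rightarrow> ('v set \<Rightarrow> bool) \<Rightarrow> nat \<Rightarrow> 'v \<Rightarrow> 'v \<Rightarrow> int" where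
  "gamma bos E col par i x y =
     (if x \<in> bos \<and> y \<notin> bos then Lmat E col par i x y
      else if x \<notin> bos \<and> y \<in> bos then Lmat E col par i y x
      else 0)"

definition mmul :: "'v set \<Rightarrow> ('v \<Rightarrow> 'v \<Rightarrow> int) \<Rightarrow> ('v \<Rightarrow> 'v \<Rightarrow> int) \<Rightarrow> 'v \<Rightarrow> 'v \<Rightarrow> int" where
  "mmul V A B x y = (\<Sum>z\<in>V. A x z * B z y)"

definition midt :: "'v \<Rightarrow> 'v \<Rightarrow> int" where
  "midt x y = (if x = y then 1 else 0)"

fun gprod :: "'v set \<Rightarrow> (nat \<Rightarrow> 'v \<Rightarrow> 'v \<Rightarrow> int) \<Rightarrow> nat list \<Rightarrow> 'v \<Rightarrow> 'v \<Rightarrow> int" where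
  "gprod V g [] = midt"
| "gprod V g (i # is) = mmul V (g i) (gprod V g is)"

end

theory Submission
  imports Defs
begin

text \<open>Each \<open>\<gamma>\<^sub>i\<close> is a signed permutation matrix, namely that of the involution \<open>\<sigma>\<^sub>i\<close> sending a
  vertex to its neighbour of colour \<open>i\<close>; hence \<open>M\<close> is a signed permutation matrix of the composite
  \<open>\<sigma> = \<sigma>\<^sub>i\<^sub>t \<circ> \<dots> \<circ> \<sigma>\<^sub>i\<^sub>1\<close>, and \<open>M\<^sub>x\<^sub>x \<noteq> 0\<close> exactly when \<open>\<sigma> x = x\<close>. The 4-cycle condition says that
  the \<open>\<sigma>\<^sub>i\<close> commute, so \<open>\<sigma>\<close> commutes with every \<open>\<sigma>\<^sub>j\<close> and its fixed points are closed under
  moving along edges. By connectivity \<open>\<sigma>\<close> fixes either no vertex or all of them.\<close>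

lemma gprod_nonzero_iff_fold:
  fixes g :: "nat \<Rightarrow> 'v \<Rightarrow> 'v \<Rightarrow> int" and \<sigma> :: "nat \<Rightarrow> 'v \<Rightarrow> 'v"
  assumes "finite V"
    and \<sigma>_closed: "\<And>i x. i \<in> I \<Longrightarrow> x \<in> V \<Longrightarrow> \<sigma> i x \<in> V"
    and g_nonzero: "\<And>i x y. i \<in> I \<Longrightarrow> x \<in> V \<Longrightarrow> y \<in> V \<Longrightarrow> g i x y \<noteq> 0 \<longleftrightarrow> y = \<sigma> i x"
    and "set is \<subseteq> I" and "x \<in> V"
  shows "gprod V g is x y \<noteq> 0 \<longleftrightarrow> y = fold \<sigma> is x"
  using assms(4,5)
proof (induction "is" arbitrary: x)
  case Nil
  then show ?case by (simp add: midt_def)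
next
  case (Cons i "is")
  let ?z = "\<sigma> i x"
  have i: "i \<in> I" and z: "?z \<in> V" using Cons.prems \<sigma>_closed by auto
  have "gprod V g (i # is) x y = (\<Sum>z\<in>V. if z = ?z then g i x z * gprod V g is z y else 0)"
    unfolding gprod.simps mmul_def
    by (rule sum.cong) (use g_nonzero[OF i \<open>x \<in> V\<close>] in auto)
  also have "\<dots> = g i x ?z * gprod V g is ?z y"
    using \<open>finite V\<close> z by simp
  finally show ?case
    using Cons g_nonzero[OF i \<open>x \<in> V\<close> z] z by simp
qed

definition neighbour :: "'v set set \<Rightarrow> ('v set \<Rightarrow> nat) \<Rightarrow> nat \<Rightarrow> 'v \<Rightarrow> 'v" where
  "neighbour E col i x = (THE y. {x, y} \<in> E \<and> col {x, y} = i)"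

locale adinkra_graph =
  fixes V :: "'v set" and E :: "'v set set" and bos :: "'v set"
    and col :: "'v set \<Rightarrow> nat" and par :: "'v set \<Rightarrow> bool" and N :: nat
  assumes adinkra: "adinkra V E bos col par N"
begin

lemma finite_vertices: "finite V"
  and edges_doubletons: "\<forall>e\<in>E. \<exists>u w. u \<in> V \<and> w \<in> V \<and> u \<noteq> w \<and> e = {u, w}"
  and connected: "\<forall>u\<in>V. \<forall>w\<in>V. (u, w) \<in> {(a, b). {a, b} \<in> E}\<^sup>*"
  and bipartite: "\<forall>u w. {u, w} \<in> E \<longrightarrow> (u \<in> bos \<longleftrightarrow> w \<notin> bos)"
  and edge_colours: "\<forall>e\<in>E. col e \<in> {1..N}"
  and one_edge_per_colour: "\<forall>v\<in>V. \<forall>i\<in>{1..N}. \<exists>!e. e \<in> E \<and> v \<in> e \<and> col e = i"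
  and four_cycles: "\<forall>v0 v1 v2 i j. i \<noteq> j \<and> {v0, v1} \<in> E \<and> col {v0, v1} = i \<and>
         {v1, v2} \<in> E \<and> col {v1, v2} = j \<longrightarrow> four_cycle_ok E col par v0 v1 v2 i j"
  using adinkra unfolding adinkra_def by auto

lemma edge_in_vertices:
  assumes "{x, y} \<in> E"
  shows "x \<in> V \<and> y \<in> V \<and> x \<noteq> y"
proof -
  obtain u w where "u \<in> V" "w \<in> V" "u \<noteq> w" "{x, y} = {u, w}"
    using edges_doubletons assms by blast
  then show ?thesis by (metis doubleton_eq_iff)
qed

lemma edge_colour_range: "{x, y} \<in> E \<Longrightarrow> col {x, y} \<in> {1..N}"
  using edge_colours by blast

lemma ex1_neighbour:
  assumes x: "x \<in> V" and i: "i \<in> {1..N}"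
  shows "\<exists>!y. {x, y} \<in> E \<and> col {x, y} = i"
proof -
  have "\<exists>!e. e \<in> E \<and> x \<in> e \<and> col e = i"
    using one_edge_per_colour x i by blast
  then obtain e where e: "e \<in> E" "x \<in> e" "col e = i"
    and e_unique: "\<And>e'. e' \<in> E \<Longrightarrow> x \<in> e' \<Longrightarrow> col e' = i \<Longrightarrow> e' = e"
    by blast
  obtain u w where "e = {u, w}"
    using edges_doubletons e(1) by blast
  with e(2) obtain y where y: "e = {x, y}"
    by blast
  show ?thesis
  proof
    show "{x, y} \<in> E \<and> col {x, y} = i" using e y by simp
  next
    fix y' assume y': "{x, y'} \<in> E \<and> col {x, y'} = i"
    then have "{x, y'} = {x, y}" using e_unique y by blast
    then show "y' = y" using y' edge_in_vertices by (metis doubleton_eq_iff)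
  qed
qed

lemma neighbour_edge:
  "x \<in> V \<Longrightarrow> i \<in> {1..N} \<Longrightarrow> {x, neighbour E col i x} \<in> E \<and> col {x, neighbour E col i x} = i"
  unfolding neighbour_def using ex1_neighbour by (rule theI')

lemma neighbour_eqI:
  assumes "x \<in> V" "{x, y} \<in> E" "col {x, y} = i"
  shows "neighbour E col i x = y"
  unfolding neighbour_def
  using the1_equality[OF ex1_neighbour] assms edge_colour_range by blast

lemma neighbour_in_vertices: "x \<in> V \<Longrightarrow> i \<in> {1..N} \<Longrightarrow> neighbour E col i x \<in> V"
  using neighbour_edge edge_in_vertices by blast

lemma neighbour_neighbour:
  assumes "x \<in> V" "i \<in> {1..N}"
  shows "neighbour E col i (neighbour E col i x) = x"
  using neighbour_edge[OF assms] neighbour_in_vertices[OF assms]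
  by (intro neighbour_eqI) (auto simp: insert_commute)

lemma neighbour_commute:
  assumes x: "x \<in> V" and i: "i \<in> {1..N}" and j: "j \<in> {1..N}"
  shows "neighbour E col i (neighbour E col j x) = neighbour E col j (neighbour E col i x)"
proof (cases "i = j")
  case False
  define v1 where "v1 = neighbour E col i x"
  define v2 where "v2 = neighbour E col j v1"
  have v1: "v1 \<in> V" "{x, v1} \<in> E" "col {x, v1} = i"
    using neighbour_edge[OF x i] neighbour_in_vertices[OF x i] v1_def by auto
  have v2: "v2 \<in> V" "{v1, v2} \<in> E" "col {v1, v2} = j"
    using neighbour_edge[OF v1(1) j] neighbour_in_vertices[OF v1(1) j] v2_def by auto
  have "four_cycle_ok E col par x v1 v2 i j"
    using four_cycles False v1 v2 by blast
  then obtain v3 where v3: "{v2, v3} \<in> E" "col {v2, v3} = i" "{v3, x} \<in> E" "col {v3, x} = j"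
    unfolding four_cycle_ok_def by blast
  have "neighbour E col j x = v3"
    using v3 x by (intro neighbour_eqI) (auto simp: insert_commute)
  moreover have "neighbour E col i v2 = v3"
    using v3 v2 by (intro neighbour_eqI) auto
  ultimately have "neighbour E col i (neighbour E col j x) = neighbour E col i (neighbour E col i v2)"
    by simp
  also have "\<dots> = v2" using neighbour_neighbour v2(1) i by blast
  finally show ?thesis unfolding v2_def v1_def .
qed simp

lemma fold_neighbour_in_vertices:
  "x \<in> V \<Longrightarrow> set is \<subseteq> {1..N} \<Longrightarrow> fold (neighbour E col) is x \<in> V"
  by (induction "is" arbitrary: x) (auto simp: neighbour_in_vertices)

lemma fold_neighbour_commute:
  "x \<in> V \<Longrightarrow> set is \<subseteq> {1..N} \<Longrightarrow> j \<in> {1..N} \<Longrightarrow>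
   fold (neighbour E col) is (neighbour E col j x) = neighbour E col j (fold (neighbour E col) is x)"
proof (induction "is" arbitrary: x)
  case (Cons i "is")
  then have i: "i \<in> {1..N}" by simp
  have "fold (neighbour E col) (i # is) (neighbour E col j x)
      = fold (neighbour E col) is (neighbour E col j (neighbour E col i x))"
    using neighbour_commute[OF _ i] Cons.prems by simp
  also have "\<dots> = neighbour E col j (fold (neighbour E col) (i # is) x)"
    using Cons neighbour_in_vertices[OF _ i] by simp
  finally show ?case .
qed simp

lemma fold_neighbour_fixed_everywhere:
  assumes x: "x \<in> V" and "is": "set is \<subseteq> {1..N}"
    and fixed: "fold (neighbour E col) is x = x" and y: "y \<in> V"
  shows "fold (neighbour E col) is y = y"
proof -
  have "(x, y) \<in> {(a, b). {a, b} \<in> E}\<^sup>*"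
    using connected x y by blast
  then have "y \<in> V \<and> fold (neighbour E col) is y = y"
  proof (induction rule: rtrancl_induct)
    case base
    show ?case using x fixed by simp
  next
    case (step y z)
    then have yz: "{y, z} \<in> E" by simp
    have z: "z = neighbour E col (col {y, z}) y"
      using neighbour_eqI step yz by simp
    show ?case
      using fold_neighbour_commute[of y "is" "col {y, z}"] step "is" z
        edge_colour_range[OF yz] edge_in_vertices[OF yz] by simp
  qed
  then show ?thesis by simp
qed

lemma gamma_nonzero_iff:
  "gamma bos E col par i x y \<noteq> 0 \<longleftrightarrow> {x, y} \<in> E \<and> col {x, y} = i"
proof (cases "{x, y} \<in> E")
  case True
  then have "x \<in> bos \<longleftrightarrow> y \<notin> bos" using bipartite by blast
  with True show ?thesis unfolding gamma_def Lmat_def by (auto simp: insert_commute)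
qed (auto simp: gamma_def Lmat_def insert_commute)

lemma gprod_gamma_nonzero_iff:
  assumes "x \<in> V" "set is \<subseteq> {1..N}"
  shows "gprod V (gamma bos E col par) is x y \<noteq> 0 \<longleftrightarrow> y = fold (neighbour E col) is x"
proof (rule gprod_nonzero_iff_fold[OF finite_vertices _ _ assms(2,1)])
  fix i x y assume "i \<in> {1..N}" "x \<in> V" "y \<in> V"
  then show "gamma bos E col par i x y \<noteq> 0 \<longleftrightarrow> y = neighbour E col i x"
    using gamma_nonzero_iff neighbour_edge neighbour_eqI by metis
qed (rule neighbour_in_vertices)

end

theorem mainTheorem12:
  fixes V :: "'v set" and E :: "'v set set" and bos :: "'v set"
    and col :: "'v set \<Rightarrow> nat" and par :: "'v set \<Rightarrow> bool"
    and N k :: nat and "is" :: "nat list"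
  assumes "NK_adinkra V E bos col par N k"
    and "set is \<subseteq> {1..N}"
  shows "(\<exists>x\<in>V. gprod V (gamma bos E col par) is x x \<noteq> 0) \<longleftrightarrow>
         (\<forall>x\<in>V. gprod V (gamma bos E col par) is x x \<noteq> 0)"
proof -
  interpret adinkra_graph V E bos col par N
    using assms(1) unfolding NK_adinkra_def by unfold_locales blast
  have diag: "gprod V (gamma bos E col par) is x x \<noteq> 0 \<longleftrightarrow> fold (neighbour E col) is x = x"
    if "x \<in> V" for x
    using gprod_gamma_nonzero_iff[OF that assms(2)] by metis
  have "V \<noteq> {}"
    using assms(1) unfolding NK_adinkra_def by (metis card.empty power_not_zero zero_neq_numeral)
  then show ?thesis
    using diag fold_neighbour_fixed_everywhere[OF _ assms(2)] by blast
qed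

end
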